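(* Let $\mathcal{S}$ be a discrete state space and let $\{\mathcal{X}(t)\}_{t\in\mathbb{N}_0}$ be a discrete-time homogeneous Markov chain on $\mathcal{S}$ with transition matrix $A$ having no absorbing states, i.e. $A_{ii}<1$ for all $i$. Write $p_i=1-A_{ii}\in(0,1]$, $q_i=1-p_i$, and $H_{ij}=0$ if $j=i$, $H_{ij}=A_{ij}/(1-A_{ii})$ if $j\ne i$. Then $\mathcal{X}$ can be written as $\mathcal{X}(t)=X_n$ for $V_n\le t<V_{n+1}$, where $\{X_n\}$ is a Markov chain with transition matrix $H$, $V_0=0$, $V_n=\sum_{k=0}^{n-1}M_k$, and $P(M_k=r\mid X_k=i)=p_iq_i^{r-1}$, $r\in\mathbb{N}$. Let $Z,Z_1,Z_2,\dots$ be i.i.d. positive-integer-valued random variables, independent of $\mathcal{X}$, let $\sigma_d(0)=0$, $\sigma_d(n)=\sum_{j=1}^nZ_j$, and $L_d(t)=\max\{n\in\mathbb{N}_0:\sigma_d(n)\le t\}$, $t\in\mathbb{N}_0$. Then the time-changed process $\mathcal{Y}(t)=\mathcal{X}(L_d(t))$, $t\in\mathbb{N}_0$, is a semi-Markov chain of type A: that is, $\mathcal{Y}(t)=X_n$ for $T_n\le t<T_{n+1}$, where $\{X_n\}$ is the Markov chain with transition matrix $H$, $T_0=0$, $T_n=\sum_{k=0}^{n-1}J_k$, and the waiting times have the compound geometric form $J_k\overset{d}{=}\sum_{i=1}^{M_k}Z_i$, so that $\mathbb{E}(u^{J_k}\mid X_k=i)=\dfrac{p_i\,\mathbb{E}u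^Z}{1-q_i\,\mathbb{E}u^Z}$.
   Context: $\mathbb{N}_0=\mathbb{N}\cup\{0\}$. In the semi-Markov chain the conditional law of the waiting time $J_k$ given $X_k=i$ depends only on $i$ (not on $k$); here it is the law of $\sum_{i=1}^{M}Z_i$ with $M$ geometric, $P(M=r)=p_iq_i^{r-1}$, independent of the $Z$'s. *)

theory Defs
  imports "HOL-Probability.Probability"
begin

definition dtmc :: "'m measure \<Rightarrow> (nat \<Rightarrow> 'm \<Rightarrow> 'a) \<Rightarrow> ('a \<Rightarrow> 'a \<Rightarrow> real) \<Rightarrow> bool" where
  "dtmc M X A \<longleftrightarrow>
     (\<forall>t. X t \<in> measurable M (count_space UNIV)) \<and>
     (\<forall>n s. measure M {\<omega> \<in> space M. \<forall>k\<le>n. X k \<omega> = s k}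
            = measure M {\<omega> \<in> space M. X 0 \<omega> = s 0} * (\<Prod>k<n. A (s k) (s (Suc k))))"

definition jump_matrix :: "('a \<Rightarrow> 'a \<Rightarrow> real) \<Rightarrow> 'a \<Rightarrow> 'a \<Rightarrow> real" where
  "jump_matrix A i j = (if j = i then 0 else A i j / (1 - A i i))"

text \<open>The path y visits states s 0, ..., s n with sojourn times r 0, ..., r n:
with T_k = r 0 + ... + r (k-1), y t = s k for T_k \<le> t < T_(k+1), and y jumps
(changes state) at T_(k+1).\<close>
definition sojourn_path :: "(nat \<Rightarrow> 'a) \<Rightarrow> (nat \<Rightarrow> 'a) \<Rightarrow> (nat \<Rightarrow> nat) \<Rightarrow> nat \<Rightarrow> bool" where
  "sojourn_path y s r n \<longleftrightarrow>
     (\<forall>k\<le>n. (\<forall>t. (\<Sum>j<k. r j) \<le> t \<and> t < (\<Sum>j<Suc k. r j) \<longrightarrow> y t = s k)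
             \<and> y (\<Sum>j<Suc k. r j) \<noteq> s k)"

text \<open>Semi-Markov chain of type A with embedded chain transition matrix H and
sojourn-time law F i (depending only on the current state i): the joint law of
(X_0, J_0, ..., X_n, J_n) is  P(X_0 = s_0) * prod H(s_k, s_(k+1)) * prod F(s_k)(r_k).\<close>
definition semi_markov_typeA ::
  "'m measure \<Rightarrow> (nat \<Rightarrow> 'm \<Rightarrow> 'a) \<Rightarrow> ('a \<Rightarrow> 'a \<Rightarrow> real) \<Rightarrow> ('a \<Rightarrow> nat \<Rightarrow> real) \<Rightarrow> bool" where
  "semi_markov_typeA M Y H F \<longleftrightarrow>
     (\<forall>t. Y t \<in> measurable M (count_space UNIV)) \<and>
     (\<forall>n s r. (\<forall>k\<le>n. 1 \<le> r k) \<longrightarrow>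
        measure M {\<omega> \<in> space M. sojourn_path (\<lambda>t. Y t \<omega>) s r n}
        = measure M {\<omega> \<in> space M. Y 0 \<omega> = s 0}
          * (\<Prod>k<n. H (s k) (s (Suc k))) * (\<Prod>k\<le>n. F (s k) (r k)))"

definition geom_law :: "real \<Rightarrow> nat \<Rightarrow> real" where
  "geom_law p r = (if 1 \<le> r then p * (1 - p) ^ (r - 1) else 0)"

text \<open>Law of Z_1 + ... + Z_M with M geometric(p) independent of the Z's
(here Z_(j+1) is represented by Z j).\<close>
definition compound_geom_law :: "'m measure \<Rightarrow> (nat \<Rightarrow> 'm \<Rightarrow> nat) \<Rightarrow> real \<Rightarrow> nat \<Rightarrow> real" where
  "compound_geom_law M Z p r =
     (\<Sum>m. geom_law p (Suc m) * measure M {\<omega> \<in> space M. (\<Sum>j<Suc m. Z j \<omega>) = r})"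

definition renewal_count :: "(nat \<Rightarrow> nat) \<Rightarrow> nat \<Rightarrow> nat" where
  "renewal_count \<sigma> t = Max {n. \<sigma> n \<le> t}"

end

theory Submission
  imports Defs
begin

text \<open>
  The event that \<open>X\<close> visits \<open>s\<^sub>0, \<dots>, s\<^sub>n\<close> with sojourn times
  \<open>r\<^sub>0, \<dots>, r\<^sub>n\<close> says that \<open>X\<close> follows one fixed path up to time
  \<open>r\<^sub>0 + \<dots> + r\<^sub>n - 1\<close> and then leaves \<open>s\<^sub>n\<close>; its probability is a product of
  transition probabilities, which regroups into jump probabilities \<open>H\<close> and geometric sojourn
  laws. For \<open>Y = X \<circ> L\<^sub>d\<close> every jump happens at a renewal epoch, and a sojourn of
  \<open>X\<close> of length \<open>m\<close> becomes a sojourn of \<open>Y\<close> whose length is the sum of the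
  \<open>m\<close> interarrival times it contains. So the event that \<open>Y\<close> has sojourn times \<open>r\<close>
  is a disjoint union, over the sojourn times \<open>m\<close> of \<open>X\<close>, of an event of \<open>X\<close>
  intersected with an event on disjoint blocks of \<open>Z\<close>'s. Independence factorises each term,
  and summing over \<open>m\<close> gives the compound geometric sojourn laws. Their generating function
  is a double series over the number of geometric trials and the value of the sum, which
  converges absolutely and can be summed row by row.
\<close>

section \<open>Sojourn paths\<close>

lemma partial_sum_mono:
  fixes r :: "nat \<Rightarrow> nat"
  shows "a \<le> b \<Longrightarrow> (\<Sum>j<a. r j) \<le> (\<Sum>j<b. r j)"
  by (intro sum_mono2) auto

lemma partial_sum_interval:
  fixes r :: "nat \<Rightarrow> nat"
  assumes "t < (\<Sum>j<Suc n. r j)"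
  obtains k where "k \<le> n" "(\<Sum>j<k. r j) \<le> t" "t < (\<Sum>j<Suc k. r j)"
  using assms
proof (induction n)
  case 0
  then show ?case by auto
next
  case (Suc n)
  show ?case
  proof (cases "t < (\<Sum>j<Suc n. r j)")
    case True
    then show ?thesis using Suc.IH Suc.prems(1) le_SucI by blast
  next
    case False
    then show ?thesis using Suc.prems(1)[of "Suc n"] Suc.prems(2) by simp
  qed
qed

text \<open>The path visiting \<open>s 0, \<dots>, s n\<close> with sojourn times \<open>r 0, \<dots>, r (n - 1)\<close>
  and staying in \<open>s n\<close> forever after.\<close>
definition step_path :: "(nat \<Rightarrow> 'a) \<Rightarrow> (nat \<Rightarrow> nat) \<Rightarrow> nat \<Rightarrow> nat \<Rightarrow> 'a" where
  "step_path s r n t = s (card {k. k < n \<and> (\<Sum>j<Suc k. r j) \<le> t})"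

lemma step_path_eq:
  assumes "k \<le> n" "(\<Sum>j<k. r j) \<le> t" "k < n \<Longrightarrow> t < (\<Sum>j<Suc k. r j)"
  shows "step_path s r n t = s k"
proof -
  have "{i. i < n \<and> (\<Sum>j<Suc i. r j) \<le> t} = {..<k}"
  proof (intro set_eqI iffI)
    fix i assume i: "i \<in> {i. i < n \<and> (\<Sum>j<Suc i. r j) \<le> t}"
    show "i \<in> {..<k}"
    proof (rule ccontr)
      assume "i \<notin> {..<k}"
      then have "k < n" "(\<Sum>j<Suc k. r j) \<le> (\<Sum>j<Suc i. r j)"
        using i assms(1) partial_sum_mono[of "Suc k" "Suc i" r] by auto
      then show False using i assms(3) by simp
    qed
  next
    fix i assume "i \<in> {..<k}"
    then show "i \<in> {i. i < n \<and> (\<Sum>j<Suc i. r j) \<le> t}"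
      using assms(1,2) partial_sum_mono[of "Suc i" k r] by auto
  qed
  then show ?thesis unfolding step_path_def by simp
qed

lemma sojourn_path_iff_step_path:
  assumes r: "\<forall>k\<le>n. 1 \<le> r k" and s: "\<forall>k<n. s (Suc k) \<noteq> s k"
  shows "sojourn_path y s r n \<longleftrightarrow>
    (\<forall>t<(\<Sum>j<Suc n. r j). y t = step_path s r n t) \<and> y (\<Sum>j<Suc n. r j) \<noteq> s n"
proof
  assume sp: "sojourn_path y s r n"
  have "y t = step_path s r n t" if t: "t < (\<Sum>j<Suc n. r j)" for t
  proof -
    obtain k where "k \<le> n" "(\<Sum>j<k. r j) \<le> t" "t < (\<Sum>j<Suc k. r j)"
      using partial_sum_interval[OF t] .
    then show ?thesis using sp step_path_eq[of k n r t s] unfolding sojourn_path_def by auto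
  qed
  then show "(\<forall>t<(\<Sum>j<Suc n. r j). y t = step_path s r n t) \<and> y (\<Sum>j<Suc n. r j) \<noteq> s n"
    using sp unfolding sojourn_path_def by auto
next
  assume h: "(\<forall>t<(\<Sum>j<Suc n. r j). y t = step_path s r n t) \<and> y (\<Sum>j<Suc n. r j) \<noteq> s n"
  show "sojourn_path y s r n" unfolding sojourn_path_def
  proof (intro allI impI conjI)
    fix k t assume k: "k \<le> n" and t: "(\<Sum>j<k. r j) \<le> t \<and> t < (\<Sum>j<Suc k. r j)"
    have "t < (\<Sum>j<Suc n. r j)" using t partial_sum_mono[of "Suc k" "Suc n" r] k by linarith
    then show "y t = s k" using h step_path_eq[of k n r t s] k t by auto
  next
    fix k assume k: "k \<le> n"
    show "y (\<Sum>j<Suc k. r j) \<noteq> s k"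
    proof (cases "k = n")
      case True
      then show ?thesis using h by simp
    next
      case False
      then have kn: "Suc k \<le> n" using k by simp
      then have "(\<Sum>j<Suc k. r j) < (\<Sum>j<Suc (Suc k). r j)" using r by (simp add: Suc_le_eq)
      also have "\<dots> \<le> (\<Sum>j<Suc n. r j)" using partial_sum_mono[of "Suc (Suc k)" "Suc n" r] kn by simp
      finally have "y (\<Sum>j<Suc k. r j) = step_path s r n (\<Sum>j<Suc k. r j)" using h by simp
      also have "\<dots> = s (Suc k)" using step_path_eq[of "Suc k" n r _ s] kn r by (simp add: Suc_le_eq)
      finally show ?thesis using s kn by simp
    qed
  qed
qed

lemma prod_lessThan_split:
  fixes f :: "nat \<Rightarrow> 'b::comm_monoid_mult"
  shows "(\<Prod>t<b + 1 + c. f t) = (\<Prod>t<b. f t) * f b * (\<Prod>i<c. f (b + 1 + i))"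
  by (induction c) (simp_all add: ac_simps)

lemma prod_step_path:
  fixes f :: "'a \<Rightarrow> 'a \<Rightarrow> 'b::comm_monoid_mult"
  assumes r: "\<forall>k\<le>n. 1 \<le> r k" and "m \<le> n"
  shows "(\<Prod>t<(\<Sum>j<Suc m. r j) - 1. f (step_path s r n t) (step_path s r n (Suc t)))
         = (\<Prod>k<m. f (s k) (s (Suc k))) * (\<Prod>k\<le>m. f (s k) (s k) ^ (r k - 1))"
  using \<open>m \<le> n\<close>
proof (induction m)
  case 0
  have "(\<Prod>t<r 0 - 1. f (step_path s r n t) (step_path s r n (Suc t))) = (\<Prod>t<r 0 - 1. f (s 0) (s 0))"
    by (intro prod.cong refl) (simp add: step_path_eq[of 0 n r _ s])
  then show ?case by simp
next
  case (Suc m)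
  let ?g = "\<lambda>t. f (step_path s r n t) (step_path s r n (Suc t))"
  define b where "b = (\<Sum>j<Suc m. r j) - 1"
  define c where "c = r (Suc m) - 1"
  have rm: "1 \<le> r m" "1 \<le> r (Suc m)" using r Suc.prems by auto
  then have b: "Suc b = (\<Sum>j<Suc m. r j)" unfolding b_def by simp
  have "(\<Sum>j<Suc (Suc m). r j) - 1 = b + 1 + c"
    using rm b unfolding c_def by simp
  then have "(\<Prod>t<(\<Sum>j<Suc (Suc m). r j) - 1. ?g t) = (\<Prod>t<b. ?g t) * ?g b * (\<Prod>i<c. ?g (b + 1 + i))"
    by (simp only: prod_lessThan_split)
  moreover have "?g b = f (s m) (s (Suc m))"
    using step_path_eq[of m n r b s] step_path_eq[of "Suc m" n r "Suc b" s] Suc.prems rm b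
    by (simp add: b_def)
  moreover have "?g (b + 1 + i) = f (s (Suc m)) (s (Suc m))" if "i < c" for i
    using step_path_eq[of "Suc m" n r _ s] Suc.prems that b unfolding c_def by simp
  ultimately have "(\<Prod>t<(\<Sum>j<Suc (Suc m). r j) - 1. ?g t)
      = (\<Prod>t<b. ?g t) * f (s m) (s (Suc m)) * f (s (Suc m)) (s (Suc m)) ^ c"
    by simp
  then show ?case using Suc unfolding b_def c_def by (simp add: ac_simps)
qed

lemma sojourn_path_unique:
  assumes "sojourn_path y s r n" "sojourn_path y s r' n" "k \<le> n"
  shows "r k = r' k"
proof -
  have "(\<Sum>j<k. r j) = (\<Sum>j<k. r' j)" if "k \<le> Suc n" for k
    using that
  proof (induction k)
    case 0
    then show ?case by simp
  next
    case (Suc k)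
    then have k: "k \<le> n" and IH: "(\<Sum>j<k. r j) = (\<Sum>j<k. r' j)" by auto
    have "\<not> (\<Sum>j<Suc k. r j) < (\<Sum>j<Suc k. r' j)"
      using assms(1,2) k IH unfolding sojourn_path_def by (metis le_add1 sum.lessThan_Suc)
    moreover have "\<not> (\<Sum>j<Suc k. r' j) < (\<Sum>j<Suc k. r j)"
      using assms(1,2) k IH unfolding sojourn_path_def by (metis le_add1 sum.lessThan_Suc)
    ultimately show ?case by simp
  qed
  then show ?thesis using assms(3) by (metis Suc_le_mono add_left_cancel le_SucI sum.lessThan_Suc)
qed

lemma sojourn_path_cong:
  assumes "\<forall>t\<le>(\<Sum>j<Suc n. r j). y t = y' t"
  shows "sojourn_path y s r n \<longleftrightarrow> sojourn_path y' s r n"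
proof -
  have "\<forall>k\<le>n. \<forall>t\<le>(\<Sum>j<Suc k. r j). y t = y' t"
    using assms partial_sum_mono[of "Suc k" "Suc n" r for k] by (meson Suc_le_mono le_trans)
  then have "\<forall>k\<le>n. (\<forall>t<(\<Sum>j<Suc k. r j). y t = y' t) \<and> y (\<Sum>j<Suc k. r j) = y' (\<Sum>j<Suc k. r j)"
    by auto
  then show ?thesis unfolding sojourn_path_def by metis
qed

lemma sojourn_path_repeated_state:
  assumes "\<forall>k\<le>n. 1 \<le> r k" "k < n" "s (Suc k) = s k"
  shows "\<not> sojourn_path y s r n"
proof
  assume sp: "sojourn_path y s r n"
  have "(\<Sum>j<Suc k. r j) < (\<Sum>j<Suc (Suc k). r j)" using assms(1,2) by (simp add: Suc_le_eq)
  then have "y (\<Sum>j<Suc k. r j) = s (Suc k)" using sp assms(2) unfolding sojourn_path_def by auto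
  then show False using sp assms(2,3) unfolding sojourn_path_def by auto
qed

lemma jump_geom_factorization:
  assumes A: "\<forall>i. A i i < 1" and s: "\<forall>k<n. s (Suc k) \<noteq> s k" and r: "\<forall>k\<le>n. 1 \<le> r k"
  shows "(\<Prod>k<n. A (s k) (s (Suc k))) * (\<Prod>k\<le>n. A (s k) (s k) ^ (r k - 1)) * (1 - A (s n) (s n))
    = (\<Prod>k<n. jump_matrix A (s k) (s (Suc k))) * (\<Prod>k\<le>n. geom_law (1 - A (s k) (s k)) (r k))"
proof -
  define p where "p k = 1 - A (s k) (s k)" for k
  define q where "q k = A (s k) (s k) ^ (r k - 1)" for k
  have p: "p k \<noteq> 0" for k using A unfolding p_def by (metis less_irrefl right_minus_eq)
  have "(\<Prod>k<n. jump_matrix A (s k) (s (Suc k))) * (\<Prod>k<n. p k) = (\<Prod>k<n. A (s k) (s (Suc k)))"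
    using s p unfolding jump_matrix_def p_def by (simp add: prod.distrib[symmetric])
  moreover have "(\<Prod>k\<le>n. geom_law (1 - A (s k) (s k)) (r k)) = (\<Prod>k\<le>n. p k) * (\<Prod>k\<le>n. q k)"
    using r unfolding geom_law_def p_def q_def by (simp add: prod.distrib)
  moreover have "(\<Prod>k\<le>n. p k) = (\<Prod>k<n. p k) * p n"
    by (simp add: lessThan_Suc_atMost[symmetric])
  ultimately show ?thesis unfolding p_def q_def by (simp add: ac_simps)
qed

lemma sum_partial_sums_iff_blocks:
  fixes z :: "nat \<Rightarrow> nat"
  shows "(\<forall>k\<le>Suc n. (\<Sum>j<(\<Sum>i<k. m i). z j) = (\<Sum>i<k. r i)) \<longleftrightarrow>
    (\<forall>k\<le>n. (\<Sum>j\<in>{(\<Sum>i<k. m i)..<(\<Sum>i<Suc k. m i)}. z j) = r k)"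
proof -
  have split: "(\<Sum>j<(\<Sum>i<Suc k. m i). z j)
      = (\<Sum>j<(\<Sum>i<k. m i). z j) + (\<Sum>j\<in>{(\<Sum>i<k. m i)..<(\<Sum>i<Suc k. m i)}. z j)" for k
    by (simp add: sum.atLeastLessThan_concat[of 0, symmetric] atLeast0LessThan[symmetric])
  show ?thesis
  proof (induction n)
    case 0
    then show ?case using split[of 0] by (auto simp: le_Suc_eq)
  next
    case (Suc n)
    then show ?case using split[of "Suc n"] by (auto simp: le_Suc_eq)
  qed
qed

section \<open>Renewal epochs and their counting function\<close>

locale renewal_epochs =
  fixes \<sigma> :: "nat \<Rightarrow> nat"
  assumes epoch_0: "\<sigma> 0 = 0" and epoch_less_Suc: "\<And>j. \<sigma> j < \<sigma> (Suc j)"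
begin

abbreviation L :: "nat \<Rightarrow> nat" where
  "L \<equiv> renewal_count \<sigma>"

lemma strict_mono_epochs: "strict_mono \<sigma>"
  using epoch_less_Suc by (simp add: strict_mono_Suc_iff)

lemma le_epoch: "j \<le> \<sigma> j"
  by (induction j) (use epoch_0 epoch_less_Suc in \<open>auto simp: Suc_le_eq intro: le_less_trans\<close>)

lemma epoch_add_le: "a \<le> b \<Longrightarrow> \<sigma> a + (b - a) \<le> \<sigma> b"
proof (induction b)
  case 0
  then show ?case by simp
next
  case (Suc b)
  show ?case
  proof (cases "a \<le> b")
    case True
    then show ?thesis using Suc.IH epoch_less_Suc[of b] by simp
  next
    case False
    then have "a = Suc b" using Suc.prems by simp
    then show ?thesis by simp
  qed
qed

lemma finite_epochs_le: "finite {j. \<sigma> j \<le> t}"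
  by (rule finite_subset[of _ "{..t}"]) (auto intro: le_trans[OF le_epoch])

lemma epoch_renewal_count_le: "\<sigma> (L t) \<le> t"
proof -
  have "L t \<in> {j. \<sigma> j \<le> t}" unfolding renewal_count_def
    by (rule Max_in[OF finite_epochs_le]) (use epoch_0 in \<open>auto intro!: exI[of _ 0]\<close>)
  then show ?thesis by simp
qed

lemma le_renewal_count: "\<sigma> j \<le> t \<Longrightarrow> j \<le> L t"
  unfolding renewal_count_def by (rule Max_ge[OF finite_epochs_le]) simp

lemma renewal_count_epoch: "L (\<sigma> j) = j"
  using epoch_renewal_count_le[of "\<sigma> j"] le_renewal_count[of j "\<sigma> j"] strict_mono_epochs
  by (simp add: strict_mono_less_eq)

lemma renewal_count_mono: "t \<le> t' \<Longrightarrow> L t \<le> L t'"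
  using epoch_renewal_count_le[of t] by (intro le_renewal_count) simp

lemma renewal_count_0: "L 0 = 0"
  using renewal_count_epoch[of 0] epoch_0 by simp

lemma renewal_count_eq_Max: "L t = Max {j. j \<le> t \<and> \<sigma> j \<le> t}"
  unfolding renewal_count_def using le_epoch by (metis le_trans)

text \<open>A state change of \<open>x \<circ> L\<close> can only happen at a renewal epoch.\<close>
lemma sojourn_path_time_change_epoch:
  assumes r: "\<forall>k\<le>n. 1 \<le> r k" and sp: "sojourn_path (\<lambda>t. x (L t)) s r n" and "k \<le> Suc n"
  shows "\<sigma> (L (\<Sum>j<k. r j)) = (\<Sum>j<k. r j)"
proof (cases k)
  case 0
  then show ?thesis using renewal_count_0 epoch_0 by simp
next
  case (Suc i)
  define u where "u = (\<Sum>j<Suc i. r j)"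
  have i: "i \<le> n" using Suc \<open>k \<le> Suc n\<close> by simp
  have jump: "x (L u) \<noteq> s i" using sp i unfolding sojourn_path_def u_def by blast
  have "1 \<le> r i" using r i by simp
  then have "(\<Sum>j<i. r j) \<le> u - 1 \<and> u - 1 < (\<Sum>j<Suc i. r j)" unfolding u_def by simp
  then have stay: "x (L (u - 1)) = s i" using sp i unfolding sojourn_path_def by blast
  have "\<sigma> (L u) = u"
  proof (rule ccontr)
    assume "\<sigma> (L u) \<noteq> u"
    then have "L u \<le> L (u - 1)" using epoch_renewal_count_le[of u] by (intro le_renewal_count) simp
    then have "L u = L (u - 1)" using renewal_count_mono[of "u - 1" u] by simp
    then show False using jump stay by simp
  qed
  then show ?thesis unfolding Suc u_def .
qed

lemma renewal_count_increments:
  assumes r: "\<forall>k\<le>n. 1 \<le> r k" and sp: "sojourn_path (\<lambda>t. x (L t)) s r n"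
  defines "m \<equiv> \<lambda>k\<in>{..n}. L (\<Sum>j<Suc k. r j) - L (\<Sum>j<k. r j)"
  shows "m \<in> Pi\<^sub>E {..n} (\<lambda>k. {1..r k})" and "k \<le> Suc n \<Longrightarrow> (\<Sum>j<k. m j) = L (\<Sum>j<k. r j)"
proof -
  define V where "V k = L (\<Sum>j<k. r j)" for k
  have epoch: "\<sigma> (V k) = (\<Sum>j<k. r j)" if "k \<le> Suc n" for k
    unfolding V_def by (rule sojourn_path_time_change_epoch[OF r sp that])
  have V_less: "V k < V (Suc k)" if "k \<le> n" for k
  proof -
    have "1 \<le> r k" using r that by simp
    then have "\<sigma> (V k) < \<sigma> (V (Suc k))" using epoch[of k] epoch[of "Suc k"] that by simp
    then show ?thesis using strict_mono_less[OF strict_mono_epochs] by blast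
  qed
  have "m k \<in> {1..r k}" if "k \<le> n" for k
  proof -
    have "\<sigma> (V k) + (V (Suc k) - V k) \<le> \<sigma> (V (Suc k))"
      using V_less[OF that] by (intro epoch_add_le) simp
    then have "V (Suc k) - V k \<le> r k" using epoch[of k] epoch[of "Suc k"] that by simp
    then show ?thesis using V_less[OF that] that unfolding m_def V_def by simp
  qed
  then show "m \<in> Pi\<^sub>E {..n} (\<lambda>k. {1..r k})" unfolding m_def by auto
  show "(\<Sum>j<k. m j) = L (\<Sum>j<k. r j)" if "k \<le> Suc n"
    using that
  proof (induction k)
    case 0
    then show ?case using renewal_count_0 by simp
  next
    case (Suc k)
    then show ?case using V_less[of k] unfolding m_def V_def by simp
  qed
qed

lemma sojourn_path_time_changeD:
  assumes r: "\<forall>k\<le>n. 1 \<le> r k" and sp: "sojourn_path (\<lambda>t. x (L t)) s r n"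
  obtains m where "m \<in> Pi\<^sub>E {..n} (\<lambda>k. {1..r k})" "sojourn_path x s m n"
    "\<forall>k\<le>Suc n. \<sigma> (\<Sum>j<k. m j) = (\<Sum>j<k. r j)"
proof
  define m where "m = (\<lambda>k\<in>{..n}. L (\<Sum>j<Suc k. r j) - L (\<Sum>j<k. r j))"
  have sum_m: "(\<Sum>j<k. m j) = L (\<Sum>j<k. r j)" if "k \<le> Suc n" for k
    using renewal_count_increments(2)[OF r sp that] unfolding m_def .
  have epoch: "\<sigma> (\<Sum>j<k. m j) = (\<Sum>j<k. r j)" if "k \<le> Suc n" for k
    using sojourn_path_time_change_epoch[OF r sp that] sum_m[OF that] by simp
  then show "\<forall>k\<le>Suc n. \<sigma> (\<Sum>j<k. m j) = (\<Sum>j<k. r j)" by blast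
  show "m \<in> Pi\<^sub>E {..n} (\<lambda>k. {1..r k})" using renewal_count_increments(1)[OF r sp] unfolding m_def .
  show "sojourn_path x s m n" unfolding sojourn_path_def
  proof (intro allI impI conjI)
    fix k t assume k: "k \<le> n" and t: "(\<Sum>j<k. m j) \<le> t \<and> t < (\<Sum>j<Suc k. m j)"
    then have "(\<Sum>j<k. r j) \<le> \<sigma> t \<and> \<sigma> t < (\<Sum>j<Suc k. r j)"
      using epoch[of k] epoch[of "Suc k"] strict_mono_epochs
      by (metis Suc_le_mono le_SucI strict_mono_less strict_mono_less_eq)
    then have "x (L (\<sigma> t)) = s k" using sp k unfolding sojourn_path_def by blast
    then show "x t = s k" by (simp add: renewal_count_epoch)
  next
    fix k assume k: "k \<le> n"
    then show "x (\<Sum>j<Suc k. m j) \<noteq> s k"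
      using sp sum_m[of "Suc k"] unfolding sojourn_path_def by simp
  qed
qed

lemma sojourn_path_time_changeI:
  assumes sp: "sojourn_path x s m n" and epoch: "\<forall>k\<le>Suc n. \<sigma> (\<Sum>j<k. m j) = (\<Sum>j<k. r j)"
  shows "sojourn_path (\<lambda>t. x (L t)) s r n"
  unfolding sojourn_path_def
proof (intro allI impI conjI)
  fix k t assume k: "k \<le> n" and t: "(\<Sum>j<k. r j) \<le> t \<and> t < (\<Sum>j<Suc k. r j)"
  have "(\<Sum>j<k. m j) \<le> L t" using epoch k t by (intro le_renewal_count) simp
  moreover have "L t < (\<Sum>j<Suc k. m j)"
  proof (rule ccontr)
    assume "\<not> L t < (\<Sum>j<Suc k. m j)"
    then have "\<sigma> (\<Sum>j<Suc k. m j) \<le> \<sigma> (L t)" using strict_mono_epochs by (simp add: strict_mono_less_eq)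
    then show False using epoch_renewal_count_le[of t] epoch k t by (metis Suc_le_mono leD le_trans)
  qed
  ultimately show "x (L t) = s k" using sp k unfolding sojourn_path_def by blast
next
  fix k assume k: "k \<le> n"
  have "L (\<Sum>j<Suc k. r j) = (\<Sum>j<Suc k. m j)" using epoch k renewal_count_epoch by (metis Suc_le_mono)
  then show "x (L (\<Sum>j<Suc k. r j)) \<noteq> s k" using sp k unfolding sojourn_path_def by simp
qed

text \<open>The sojourn times \<open>m\<close> of \<open>x\<close> count the renewals inside the sojourn intervals of
  \<open>x \<circ> L\<close>, and those intervals end exactly at renewal epochs.\<close>
lemma sojourn_path_time_change_iff:
  assumes "\<forall>k\<le>n. 1 \<le> r k"
  shows "sojourn_path (\<lambda>t. x (L t)) s r n \<longleftrightarrow>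
    (\<exists>m\<in>Pi\<^sub>E {..n} (\<lambda>k. {1..r k}). sojourn_path x s m n \<and>
        (\<forall>k\<le>Suc n. \<sigma> (\<Sum>j<k. m j) = (\<Sum>j<k. r j)))"
proof
  assume "sojourn_path (\<lambda>t. x (L t)) s r n"
  then obtain m where "m \<in> Pi\<^sub>E {..n} (\<lambda>k. {1..r k})" "sojourn_path x s m n"
    "\<forall>k\<le>Suc n. \<sigma> (\<Sum>j<k. m j) = (\<Sum>j<k. r j)"
    by (rule sojourn_path_time_changeD[OF assms])
  then show "\<exists>m\<in>Pi\<^sub>E {..n} (\<lambda>k. {1..r k}). sojourn_path x s m n \<and>
      (\<forall>k\<le>Suc n. \<sigma> (\<Sum>j<k. m j) = (\<Sum>j<k. r j))" by blast
qed (use sojourn_path_time_changeI in blast)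

end

section \<open>Sojourn times of a Markov chain\<close>

lemma sigma_sets_finite_dependence:
  fixes W :: "'i \<Rightarrow> 'm \<Rightarrow> 'b::countable"
  assumes F: "finite F" and gen: "\<And>t v. t \<in> F \<Longrightarrow> W t -` {v} \<inter> \<Omega> \<in> G" and G: "G \<subseteq> Pow \<Omega>"
    and S: "S \<subseteq> \<Omega>"
    and dep: "\<And>\<omega> \<omega>'. \<omega> \<in> S \<Longrightarrow> \<omega>' \<in> \<Omega> \<Longrightarrow> (\<And>t. t \<in> F \<Longrightarrow> W t \<omega>' = W t \<omega>) \<Longrightarrow> \<omega>' \<in> S"
  shows "S \<in> sigma_sets \<Omega> G"
proof -
  interpret sigma_algebra \<Omega> "sigma_sets \<Omega> G" by (rule sigma_algebra_sigma_sets[OF G])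
  define C where "C x = \<Omega> \<inter> (\<Inter>t\<in>F. W t -` {x t} \<inter> \<Omega>)" for x
  have C: "C x \<in> sigma_sets \<Omega> G" for x
  proof (cases "F = {}")
    case True
    then show ?thesis unfolding C_def by (simp add: top)
  next
    case False
    then have "(\<Inter>t\<in>F. W t -` {x t} \<inter> \<Omega>) \<in> sigma_sets \<Omega> G"
      using F gen by (intro finite_INT) (auto intro: sigma_sets.Basic)
    moreover have "C x = (\<Inter>t\<in>F. W t -` {x t} \<inter> \<Omega>)" using False unfolding C_def by auto
    ultimately show ?thesis by simp
  qed
  let ?x = "\<lambda>\<omega>. restrict (\<lambda>t. W t \<omega>) F"
  have "S = (\<Union>\<omega>\<in>S. C (?x \<omega>))"
  proof (intro set_eqI iffI)
    fix \<omega>' assume "\<omega>' \<in> (\<Union>\<omega>\<in>S. C (?x \<omega>))"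
    then obtain \<omega> where "\<omega> \<in> S" "\<omega>' \<in> C (?x \<omega>)" by blast
    moreover from this(2) have "\<omega>' \<in> \<Omega>" "\<forall>t\<in>F. W t \<omega>' = W t \<omega>"
      unfolding C_def by (auto split: if_split_asm)
    ultimately show "\<omega>' \<in> S" using dep by blast
  qed (use S in \<open>auto simp: C_def\<close>)
  also have "\<dots> = (\<Union>x\<in>?x ` S. C x)" by simp
  also have "\<dots> \<in> sigma_sets \<Omega> G"
    using C by (intro countable_UN'' countable_subset[OF _ countable_PiE[OF F]]) auto
  finally show ?thesis .
qed

lemma sets_finite_dependence:
  fixes W :: "'i \<Rightarrow> 'm \<Rightarrow> 'b::countable"
  assumes "finite F" "\<And>t. t \<in> F \<Longrightarrow> W t \<in> measurable M (count_space UNIV)" "S \<subseteq> space M"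
    "\<And>\<omega> \<omega>'. \<omega> \<in> S \<Longrightarrow> \<omega>' \<in> space M \<Longrightarrow> (\<And>t. t \<in> F \<Longrightarrow> W t \<omega>' = W t \<omega>) \<Longrightarrow> \<omega>' \<in> S"
  shows "S \<in> sets M"
  using sigma_sets_finite_dependence[of F W "space M" "sets M" S] assms
  by (simp add: measurable_sets sets.space_closed sets.sigma_sets_eq)

context prob_space
begin

lemma dtmc_prob_prefix:
  "dtmc M X A \<Longrightarrow> prob {\<omega>\<in>space M. \<forall>t\<le>N. X t \<omega> = w t}
    = prob {\<omega>\<in>space M. X 0 \<omega> = w 0} * (\<Prod>t<N. A (w t) (w (Suc t)))"
  unfolding dtmc_def by blast

lemma dtmc_prefix_event:
  fixes X :: "nat \<Rightarrow> 'a \<Rightarrow> 'b::countable"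
  shows "dtmc M X A \<Longrightarrow> {\<omega>\<in>space M. \<forall>t\<le>N. X t \<omega> = w t} \<in> events"
  unfolding dtmc_def by (rule sets_finite_dependence[of "{..N}" X]) auto

lemma dtmc_prob_prefix_exit:
  fixes X :: "nat \<Rightarrow> 'a \<Rightarrow> 'b::countable"
  assumes X: "dtmc M X A"
  shows "prob {\<omega>\<in>space M. (\<forall>t\<le>N. X t \<omega> = w t) \<and> X (Suc N) \<omega> \<noteq> v}
    = prob {\<omega>\<in>space M. X 0 \<omega> = w 0} * (\<Prod>t<N. A (w t) (w (Suc t))) * (1 - A (w N) v)"
proof -
  define w' where "w' = w(Suc N := v)"
  let ?P1 = "{\<omega>\<in>space M. \<forall>t\<le>N. X t \<omega> = w t}"
  let ?P2 = "{\<omega>\<in>space M. \<forall>t\<le>Suc N. X t \<omega> = w' t}"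
  have "{\<omega>\<in>space M. (\<forall>t\<le>N. X t \<omega> = w t) \<and> X (Suc N) \<omega> \<noteq> v} = ?P1 - ?P2"
    unfolding w'_def by (auto simp: le_Suc_eq)
  moreover have "?P2 \<subseteq> ?P1" unfolding w'_def by auto
  then have "prob (?P1 - ?P2) = prob ?P1 - prob ?P2"
    by (rule finite_measure_Diff[OF dtmc_prefix_event[OF X] dtmc_prefix_event[OF X]])
  moreover have "(\<Prod>t<Suc N. A (w' t) (w' (Suc t))) = (\<Prod>t<N. A (w t) (w (Suc t))) * A (w N) v"
    unfolding w'_def by (auto intro!: prod.cong)
  then have "prob ?P2 = prob {\<omega>\<in>space M. X 0 \<omega> = w 0} * (\<Prod>t<N. A (w t) (w (Suc t))) * A (w N) v"
    using dtmc_prob_prefix[OF X, of "Suc N" w'] by (simp add: w'_def)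
  ultimately show ?thesis
    using dtmc_prob_prefix[OF X, of N w] by (simp add: algebra_simps)
qed

lemma dtmc_sojourn_prob:
  fixes X :: "nat \<Rightarrow> 'a \<Rightarrow> 'b::countable"
  assumes X: "dtmc M X A" and A: "\<forall>i. A i i < 1" and r: "\<forall>k\<le>n. 1 \<le> r k"
  shows "prob {\<omega>\<in>space M. sojourn_path (\<lambda>t. X t \<omega>) s r n}
     = prob {\<omega>\<in>space M. X 0 \<omega> = s 0} * (\<Prod>k<n. jump_matrix A (s k) (s (Suc k)))
       * (\<Prod>k\<le>n. geom_law (1 - A (s k) (s k)) (r k))"
proof (cases "\<exists>k<n. s (Suc k) = s k")
  case True
  then obtain k where k: "k < n" "s (Suc k) = s k" by blast
  have "(\<Prod>k<n. jump_matrix A (s k) (s (Suc k))) = 0"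
    using k by (intro prod_zero) (auto simp: jump_matrix_def intro!: bexI[of _ k])
  then show ?thesis using sojourn_path_repeated_state[OF r k] by simp
next
  case False
  then have s: "\<forall>k<n. s (Suc k) \<noteq> s k" by auto
  define N where "N = (\<Sum>j<Suc n. r j) - 1"
  define w where "w = step_path s r n"
  have "0 < r n" using r by (simp add: Suc_le_eq)
  then have N: "Suc N = (\<Sum>j<Suc n. r j)" and "(\<Sum>j<n. r j) \<le> N" unfolding N_def by simp_all
  then have "w 0 = s 0" "w N = s n"
    using step_path_eq[of 0 n r 0 s] step_path_eq[of n n r N s] r unfolding w_def
    by (simp_all add: Suc_le_eq)
  moreover have "{\<omega>\<in>space M. sojourn_path (\<lambda>t. X t \<omega>) s r n}
      = {\<omega>\<in>space M. (\<forall>t\<le>N. X t \<omega> = w t) \<and> X (Suc N) \<omega> \<noteq> s n}"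
    using sojourn_path_iff_step_path[OF r s] unfolding N[symmetric] w_def[symmetric]
    by (auto simp: less_Suc_eq_le)
  moreover have "(\<Prod>t<N. A (w t) (w (Suc t)))
      = (\<Prod>k<n. A (s k) (s (Suc k))) * (\<Prod>k\<le>n. A (s k) (s k) ^ (r k - 1))"
    unfolding N_def w_def by (rule prod_step_path[OF r order.refl])
  ultimately show ?thesis
    using dtmc_prob_prefix_exit[OF X, of N w "s n"] jump_geom_factorization[of A n s r, OF A s r]
    by (simp add: ac_simps)
qed

lemma semi_markov_typeA_dtmc:
  fixes X :: "nat \<Rightarrow> 'a \<Rightarrow> 'b::countable"
  assumes "dtmc M X A" "\<forall>i. A i i < 1"
  shows "semi_markov_typeA M X (jump_matrix A) (\<lambda>i. geom_law (1 - A i i))"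
  using assms dtmc_sojourn_prob unfolding semi_markov_typeA_def dtmc_def by blast

end

section \<open>I.i.d. interarrival times\<close>

context prob_space
begin

lemma sums_prob_nat:
  fixes S :: "'a \<Rightarrow> nat"
  assumes "S \<in> measurable M (count_space UNIV)"
  shows "(\<lambda>r. prob {\<omega>\<in>space M. S \<omega> = r}) sums 1"
proof -
  have "(\<lambda>r. prob {\<omega>\<in>space M. S \<omega> = r}) sums prob (\<Union>r. {\<omega>\<in>space M. S \<omega> = r})"
    using assms by (intro finite_measure_UNION) (auto simp: disjoint_family_on_def)
  moreover have "(\<Union>r. {\<omega>\<in>space M. S \<omega> = r}) = space M" by auto
  ultimately show ?thesis by (simp add: prob_space)
qed

lemma sums_prob_eq_integral_nat:
  fixes S :: "'a \<Rightarrow> nat" and g :: "nat \<Rightarrow> real"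
  assumes S: "S \<in> measurable M (count_space UNIV)" and g: "\<And>r. \<bar>g r\<bar> \<le> B"
  shows "(\<lambda>r. prob {\<omega>\<in>space M. S \<omega> = r} * g r) sums (\<integral>\<omega>. g (S \<omega>) \<partial>M)"
proof -
  define E where "E r = {\<omega>\<in>space M. S \<omega> = r}" for r
  define f where "f r \<omega> = g r * indicator (E r) \<omega>" for r \<omega>
  have E: "E r \<in> events" for r unfolding E_def using S by measurable
  have f_single: "f r \<omega> = (if r = S \<omega> then g (S \<omega>) else 0)" if "\<omega> \<in> space M" for r \<omega>
    using that unfolding f_def E_def by auto
  have "(\<lambda>r. integral\<^sup>L M (f r)) sums (\<integral>\<omega>. (\<Sum>r. f r \<omega>) \<partial>M)"
  proof (rule sums_integral)
    show "integrable M (f r)" for r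
      unfolding f_def using E by (intro integrable_mult_right integrable_real_indicator) (auto simp: emeasure_eq_measure)
    show "AE \<omega> in M. summable (\<lambda>r. norm (f r \<omega>))"
      by (intro AE_I2 summable_finite[of "{S \<omega>}" for \<omega>]) (auto simp: f_single)
    have "summable (\<lambda>r. B * prob (E r))"
      using sums_summable[OF sums_prob_nat[OF S]] unfolding E_def by (rule summable_mult)
    moreover have "norm (\<integral>\<omega>. norm (f r \<omega>) \<partial>M) \<le> B * prob (E r)" for r
    proof -
      have "(\<integral>\<omega>. norm (f r \<omega>) \<partial>M) = \<bar>g r\<bar> * prob (E r)"
        using E unfolding f_def by (simp add: abs_mult)
      then show ?thesis using g[of r] by (simp add: mult_right_mono)
    qed
    ultimately show "summable (\<lambda>r. \<integral>\<omega>. norm (f r \<omega>) \<partial>M)"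
      by (rule summable_comparison_test')
  qed
  moreover have "integral\<^sup>L M (f r) = prob (E r) * g r" for r
    using E unfolding f_def by simp
  moreover have "(\<integral>\<omega>. (\<Sum>r. f r \<omega>) \<partial>M) = (\<integral>\<omega>. g (S \<omega>) \<partial>M)"
  proof (intro Bochner_Integration.integral_cong refl)
    fix \<omega> assume "\<omega> \<in> space M"
    then show "(\<Sum>r. f r \<omega>) = g (S \<omega>)"
      by (subst suminf_finite[of "{S \<omega>}"]) (auto simp: f_single)
  qed
  ultimately show ?thesis unfolding E_def by simp
qed

end

lemma has_sum_geometric_mult:
  fixes x :: real
  assumes "\<bar>x\<bar> < 1"
  shows "((\<lambda>m. c * x ^ m) has_sum c / (1 - x)) UNIV"
proof (rule norm_summable_imp_has_sum)
  show "summable (\<lambda>m. norm (c * x ^ m))"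
    using summable_mult[OF summable_geometric[of "\<bar>x\<bar>"], of "\<bar>c\<bar>"] assms
    by (simp add: abs_mult power_abs)
  show "(\<lambda>m. c * x ^ m) sums (c / (1 - x))"
    using sums_mult[OF geometric_sums[of x], of c] assms by simp
qed

lemma has_sum_swap_dominated:
  fixes a b :: "'i \<Rightarrow> 'j \<Rightarrow> real"
  assumes b: "\<And>m. ((\<lambda>r. b m r) has_sum d m) UNIV" and d: "d summable_on UNIV"
    and le: "\<And>m r. norm (a m r) \<le> b m r"
    and rows: "\<And>m. ((\<lambda>r. a m r) has_sum c m) UNIV"
    and cols: "\<And>r. ((\<lambda>m. a m r) has_sum e r) UNIV"
    and c: "(c has_sum S) UNIV"
  shows "(e has_sum S) UNIV"
proof -
  have "0 \<le> b m r" for m r using le[of m r] by (rule order_trans[OF norm_ge_zero])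
  then have "(\<lambda>(m, r). b m r) summable_on UNIV \<times> UNIV"
    using b d by (intro summable_on_SigmaI[where g = d]) auto
  then have "(\<lambda>x. norm ((\<lambda>(m, r). a m r) x)) summable_on UNIV \<times> UNIV"
    by (rule Infinite_Sum.abs_summable_on_comparison_test') (use le in auto)
  then obtain S' where S': "((\<lambda>(m, r). a m r) has_sum S') (UNIV \<times> UNIV)"
    using abs_summable_summable unfolding summable_on_def by blast
  have "(c has_sum S') UNIV" by (rule has_sum_SigmaD[OF S']) (simp add: rows)
  then have "S' = S" using c by (rule has_sum_unique)
  moreover have "(e has_sum S') UNIV"
    by (rule has_sum_SigmaD[OF has_sum_swap[THEN iffD1, OF S']]) (simp add: cols)
  ultimately show ?thesis by simp
qed

lemma Collect_sum_eq_UN_values: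
  fixes f :: "nat \<Rightarrow> 'a \<Rightarrow> nat" and m r :: nat
  defines "S \<equiv> {x\<in>Pi\<^sub>E {..<m} (\<lambda>_. {..r}). (\<Sum>j<m. x j) = r}"
  shows "{\<omega>\<in>\<Omega>. (\<Sum>j<m. f j \<omega>) = r} = (\<Union>x\<in>S. {\<omega>\<in>\<Omega>. \<forall>j<m. f j \<omega> = x j})"
    and "disjoint_family_on (\<lambda>x. {\<omega>\<in>\<Omega>. \<forall>j<m. f j \<omega> = x j}) S"
    and "finite S"
proof -
  show "{\<omega>\<in>\<Omega>. (\<Sum>j<m. f j \<omega>) = r} = (\<Union>x\<in>S. {\<omega>\<in>\<Omega>. \<forall>j<m. f j \<omega> = x j})"
  proof (intro set_eqI iffI)
    fix \<omega> assume \<omega>: "\<omega> \<in> {\<omega>\<in>\<Omega>. (\<Sum>j<m. f j \<omega>) = r}"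
    have "f j \<omega> \<le> r" if "j < m" for j
    proof -
      have "f j \<omega> \<le> (\<Sum>j<m. f j \<omega>)" by (rule member_le_sum) (use that in auto)
      then show ?thesis using \<omega> by simp
    qed
    moreover have "(\<Sum>j<m. restrict (\<lambda>j. f j \<omega>) {..<m} j) = r" using \<omega> by simp
    ultimately have "restrict (\<lambda>j. f j \<omega>) {..<m} \<in> S" unfolding S_def by auto
    moreover have "\<omega> \<in> {\<omega>\<in>\<Omega>. \<forall>j<m. f j \<omega> = restrict (\<lambda>j. f j \<omega>) {..<m} j}" using \<omega> by auto
    ultimately show "\<omega> \<in> (\<Union>x\<in>S. {\<omega>\<in>\<Omega>. \<forall>j<m. f j \<omega> = x j})" by blast
  next
    fix \<omega> assume "\<omega> \<in> (\<Union>x\<in>S. {\<omega>\<in>\<Omega>. \<forall>j<m. f j \<omega> = x j})"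
    then obtain x where x: "x \<in> S" "\<omega> \<in> \<Omega>" "\<forall>j<m. f j \<omega> = x j" by blast
    then have "(\<Sum>j<m. f j \<omega>) = (\<Sum>j<m. x j)" by (auto intro!: sum.cong)
    moreover have "(\<Sum>j<m. x j) = r" using x(1) unfolding S_def by blast
    ultimately show "\<omega> \<in> {\<omega>\<in>\<Omega>. (\<Sum>j<m. f j \<omega>) = r}" using x(2) by simp
  qed
  show "disjoint_family_on (\<lambda>x. {\<omega>\<in>\<Omega>. \<forall>j<m. f j \<omega> = x j}) S"
    unfolding disjoint_family_on_def
  proof (intro ballI impI)
    fix x y assume xy: "x \<in> S" "y \<in> S" "x \<noteq> y"
    have "\<exists>j<m. x j \<noteq> y j"
    proof (rule ccontr)
      assume "\<not> (\<exists>j<m. x j \<noteq> y j)"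
      then have "x = y" using xy(1,2) unfolding S_def by (intro PiE_ext[of x "{..<m}" _ y]) auto
      then show False using xy(3) by contradiction
    qed
    then obtain j where "j < m" "x j \<noteq> y j" by blast
    then show "{\<omega>\<in>\<Omega>. \<forall>j<m. f j \<omega> = x j} \<inter> {\<omega>\<in>\<Omega>. \<forall>j<m. f j \<omega> = y j} = {}" by auto
  qed
  show "finite S"
    by (rule finite_subset[of S "Pi\<^sub>E {..<m} (\<lambda>_. {..r})"]) (auto simp: S_def intro!: finite_PiE)
qed

locale iid_interarrivals = prob_space M for M :: "'m measure" +
  fixes Z :: "nat \<Rightarrow> 'm \<Rightarrow> nat"
  assumes measurable_Z [measurable]: "\<And>j. Z j \<in> measurable M (count_space UNIV)"
    and indep_Z: "indep_vars (\<lambda>_. count_space UNIV) Z UNIV"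
    and distr_Z: "\<And>j. distr M (count_space UNIV) (Z j) = distr M (count_space UNIV) (Z 0)"
    and Z_pos: "\<And>j \<omega>. \<omega> \<in> space M \<Longrightarrow> 1 \<le> Z j \<omega>"
begin

lemma renewal_epochs_partial_sums: "\<omega> \<in> space M \<Longrightarrow> renewal_epochs (\<lambda>n. \<Sum>j<n. Z j \<omega>)"
  by unfold_locales (use Z_pos in \<open>auto simp: Suc_le_eq\<close>)

lemma prob_Z_eq: "prob {\<omega>\<in>space M. Z j \<omega> = v} = prob {\<omega>\<in>space M. Z 0 \<omega> = v}"
proof -
  have "prob {\<omega>\<in>space M. Z i \<omega> = v} = measure (distr M (count_space UNIV) (Z i)) {v}" for i
    by (subst measure_distr) (auto intro!: arg_cong[where f = prob])
  then show ?thesis using distr_Z[of j] by metis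
qed

lemma prob_Z_block_eq:
  "prob {\<omega>\<in>space M. \<forall>j<m. Z (a + j) \<omega> = x j} = (\<Prod>j<m. prob {\<omega>\<in>space M. Z 0 \<omega> = x j})"
proof (cases "m = 0")
  case True
  then show ?thesis by (simp add: prob_space)
next
  case False
  let ?J = "(\<lambda>j. a + j) ` {..<m}"
  have "{\<omega>\<in>space M. \<forall>j<m. Z (a + j) \<omega> = x j} = (\<Inter>i\<in>?J. Z i -` {x (i - a)} \<inter> space M)"
    using False by auto
  also have "prob \<dots> = (\<Prod>i\<in>?J. prob (Z i -` {x (i - a)} \<inter> space M))"
    using False by (intro indep_varsD[OF indep_Z]) auto
  also have "\<dots> = (\<Prod>j<m. prob {\<omega>\<in>space M. Z (a + j) \<omega> = x j})"
    by (subst prod.reindex) (auto simp: inj_on_def Int_def conj_commute)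
  also have "\<dots> = (\<Prod>j<m. prob {\<omega>\<in>space M. Z 0 \<omega> = x j})"
    by (intro prod.cong refl prob_Z_eq)
  finally show ?thesis .
qed

text \<open>Decomposing according to the values of the summands shows that the law of a block sum
  does not depend on the position of the block.\<close>
lemma prob_sum_Z_shift:
  "prob {\<omega>\<in>space M. (\<Sum>j<m. Z (a + j) \<omega>) = r} = prob {\<omega>\<in>space M. (\<Sum>j<m. Z j \<omega>) = r}"
proof -
  define S where "S = {x\<in>Pi\<^sub>E {..<m} (\<lambda>_. {..r}). (\<Sum>j<m. x j) = r}"
  have "prob {\<omega>\<in>space M. (\<Sum>j<m. Z (a + j) \<omega>) = r} = (\<Sum>x\<in>S. \<Prod>j<m. prob {\<omega>\<in>space M. Z 0 \<omega> = x j})"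
    for a
  proof -
    note decomp = Collect_sum_eq_UN_values(1,2)[where f = "\<lambda>j. Z (a + j)" and \<Omega> = "space M"
        and m = m and r = r, folded S_def]
      and finite = Collect_sum_eq_UN_values(3)[where m = m and r = r, folded S_def]
    have "{\<omega>\<in>space M. \<forall>j<m. Z (a + j) \<omega> = x j} \<in> events" for x by measurable
    then have "prob {\<omega>\<in>space M. (\<Sum>j<m. Z (a + j) \<omega>) = r}
        = (\<Sum>x\<in>S. prob {\<omega>\<in>space M. \<forall>j<m. Z (a + j) \<omega> = x j})"
      unfolding decomp(1) using decomp(2) finite by (simp add: finite_measure_finite_Union image_subset_iff)
    then show ?thesis by (simp add: prob_Z_block_eq)
  qed
  from this[of a] this[of 0] show ?thesis by simp
qed

lemma prob_sum_Z_blocks: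
  assumes m: "\<forall>k\<le>n. 1 \<le> m k"
  shows "prob {\<omega>\<in>space M. \<forall>k\<le>n. (\<Sum>j\<in>{(\<Sum>i<k. m i)..<(\<Sum>i<Suc k. m i)}. Z j \<omega>) = r k}
    = (\<Prod>k\<le>n. prob {\<omega>\<in>space M. (\<Sum>j<m k. Z j \<omega>) = r k})"
proof -
  define K where "K k = {(\<Sum>i<k. m i)..<(\<Sum>i<Suc k. m i)}" for k
  have "K k \<inter> K k' = {}" if "k < k'" for k k'
    using partial_sum_mono[of "Suc k" k' m] that unfolding K_def by auto
  then have "disjoint_family_on K {..n}"
    unfolding disjoint_family_on_def by (metis inf_commute linorder_neq_iff)
  then have "indep_vars (\<lambda>_. count_space UNIV) (\<lambda>k \<omega>. \<Sum>j\<in>K k. Z j \<omega>) {..n}"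
    using indep_vars_compose2[OF indep_vars_restrict[OF indep_Z, where K = K and L = "{..n}"],
          where Y = "\<lambda>k x. \<Sum>j\<in>K k. x j" and N = "\<lambda>_. count_space UNIV"]
    by simp
  then have "prob (\<Inter>k\<in>{..n}. (\<lambda>\<omega>. \<Sum>j\<in>K k. Z j \<omega>) -` {r k} \<inter> space M)
      = (\<Prod>k\<in>{..n}. prob ((\<lambda>\<omega>. \<Sum>j\<in>K k. Z j \<omega>) -` {r k} \<inter> space M))"
    by (rule indep_varsD) auto
  moreover have "prob ((\<lambda>\<omega>. \<Sum>j\<in>K k. Z j \<omega>) -` {r k} \<inter> space M) = prob {\<omega>\<in>space M. (\<Sum>j<m k. Z j \<omega>) = r k}"
    for k
  proof -
    have "(\<Sum>j\<in>K k. Z j \<omega>) = (\<Sum>j<m k. Z ((\<Sum>i<k. m i) + j) \<omega>)" for \<omega>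
      unfolding K_def by (subst sum.atLeastLessThan_shift_0) (simp add: atLeast0LessThan)
    then show ?thesis using prob_sum_Z_shift[where m = "m k" and a = "\<Sum>i<k. m i" and r = "r k"] by (simp add: vimage_def Int_def conj_commute)
  qed
  moreover have "{\<omega>\<in>space M. \<forall>k\<le>n. (\<Sum>j\<in>K k. Z j \<omega>) = r k} = (\<Inter>k\<in>{..n}. (\<lambda>\<omega>. \<Sum>j\<in>K k. Z j \<omega>) -` {r k} \<inter> space M)"
    by auto
  ultimately show ?thesis unfolding K_def by simp
qed

lemma prob_sum_Z_less:
  assumes "r < k"
  shows "prob {\<omega>\<in>space M. (\<Sum>j<k. Z j \<omega>) = r} = 0"
proof -
  have "k \<le> (\<Sum>j<k. Z j \<omega>)" if "\<omega> \<in> space M" for \<omega>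
    using sum_mono[of "{..<k}" "\<lambda>_. 1" "\<lambda>j. Z j \<omega>"] Z_pos[OF that] by simp
  then have "{\<omega>\<in>space M. (\<Sum>j<k. Z j \<omega>) = r} = {}" using assms by fastforce
  then show ?thesis by (simp only: measure_empty)
qed

lemma integral_power_Z: "(\<integral>\<omega>. u ^ Z j \<omega> \<partial>M) = (\<integral>\<omega>. (u::real) ^ Z 0 \<omega> \<partial>M)"
proof -
  have "(\<integral>\<omega>. u ^ Z i \<omega> \<partial>M) = integral\<^sup>L (distr M (count_space UNIV) (Z i)) (\<lambda>z. u ^ z)" for i
    by (rule integral_distr[symmetric]) simp_all
  then show ?thesis using distr_Z[of j] by metis
qed

lemma integral_power_sum_Z:
  assumes "\<bar>u\<bar> \<le> 1"
  shows "(\<integral>\<omega>. u ^ (\<Sum>j<k. Z j \<omega>) \<partial>M) = (\<integral>\<omega>. (u::real) ^ Z 0 \<omega> \<partial>M) ^ k"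
proof -
  have "indep_vars (\<lambda>_. borel) (\<lambda>j \<omega>. u ^ Z j \<omega>) {..<k}"
    using indep_vars_compose2[OF indep_vars_subset[OF indep_Z], of "{..<k}" "\<lambda>_ z. u ^ z" "\<lambda>_. borel"]
    by simp
  moreover have "integrable M (\<lambda>\<omega>. u ^ Z j \<omega>)" for j
    using assms by (intro integrable_const_bound[where B = 1]) (auto simp: power_abs power_le_one)
  ultimately have "(\<integral>\<omega>. (\<Prod>j<k. u ^ Z j \<omega>) \<partial>M) = (\<Prod>j<k. \<integral>\<omega>. u ^ Z j \<omega> \<partial>M)"
    by (intro indep_vars_lebesgue_integral) auto
  also have "\<dots> = (\<Prod>j<k. \<integral>\<omega>. u ^ Z 0 \<omega> \<partial>M)"
    by (intro prod.cong refl integral_power_Z)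
  finally show ?thesis by (simp add: power_sum)
qed

lemma has_sum_power_sum_Z:
  assumes u: "\<bar>u\<bar> \<le> 1"
  shows "((\<lambda>r. prob {\<omega>\<in>space M. (\<Sum>j<k. Z j \<omega>) = r} * u ^ r) has_sum
    (\<integral>\<omega>. (u::real) ^ Z 0 \<omega> \<partial>M) ^ k) UNIV"
proof (rule norm_summable_imp_has_sum)
  have meas: "(\<lambda>\<omega>. \<Sum>j<k. Z j \<omega>) \<in> measurable M (count_space UNIV)" by measurable
  have bound: "norm (prob {\<omega>\<in>space M. (\<Sum>j<k. Z j \<omega>) = r} * u ^ r) \<le> prob {\<omega>\<in>space M. (\<Sum>j<k. Z j \<omega>) = r}"
    for r using u by (simp add: abs_mult power_abs power_le_one mult_left_le)
  show "summable (\<lambda>r. norm (prob {\<omega>\<in>space M. (\<Sum>j<k. Z j \<omega>) = r} * u ^ r))"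
    by (rule summable_comparison_test'[OF sums_summable[OF sums_prob_nat[OF meas]]]) (use bound in simp)
  show "(\<lambda>r. prob {\<omega>\<in>space M. (\<Sum>j<k. Z j \<omega>) = r} * u ^ r) sums (\<integral>\<omega>. u ^ Z 0 \<omega> \<partial>M) ^ k"
    using sums_prob_eq_integral_nat[of "\<lambda>\<omega>. \<Sum>j<k. Z j \<omega>" "\<lambda>r. u ^ r" 1] u
    by (simp add: integral_power_sum_Z power_abs power_le_one)
qed

lemma compound_geom_law_eq_sum:
  "compound_geom_law M Z p r = (\<Sum>m<r. geom_law p (Suc m) * prob {\<omega>\<in>space M. (\<Sum>j<Suc m. Z j \<omega>) = r})"
  unfolding compound_geom_law_def
  by (rule suminf_finite) (auto simp del: sum.lessThan_Suc simp: prob_sum_Z_less)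

lemma abs_integral_power_Z_le:
  assumes "\<bar>u\<bar> \<le> 1"
  shows "\<bar>\<integral>\<omega>. (u::real) ^ Z 0 \<omega> \<partial>M\<bar> \<le> 1"
proof -
  have "\<bar>u ^ r\<bar> \<le> 1" for r using assms by (simp add: power_abs power_le_one)
  then have u_pow: "- 1 \<le> u ^ r \<and> u ^ r \<le> 1" for r by (simp add: abs_le_iff)
  then have "integrable M (\<lambda>\<omega>. u ^ Z 0 \<omega>)"
    by (intro integrable_const_bound[where B = 1]) (auto simp: abs_le_iff)
  then have "- 1 \<le> (\<integral>\<omega>. u ^ Z 0 \<omega> \<partial>M) \<and> (\<integral>\<omega>. u ^ Z 0 \<omega> \<partial>M) \<le> 1"
    using u_pow by (auto intro!: integral_ge_const integral_le_const AE_I2)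
  then show ?thesis by linarith
qed

text \<open>Row \<open>m\<close> of the double series collects the terms with \<open>m + 1\<close> geometric trials;
  it is a multiple of the generating function of the sum of the first \<open>m + 1\<close> interarrival
  times.\<close>
lemma sums_compound_geom_law:
  fixes q u :: real
  defines "\<phi> \<equiv> \<integral>\<omega>. u ^ Z 0 \<omega> \<partial>M"
  assumes q: "0 \<le> q" "q < 1" and u: "\<bar>u\<bar> \<le> 1"
  shows "(\<lambda>r. compound_geom_law M Z (1 - q) r * u ^ r) sums ((1 - q) * \<phi> / (1 - q * \<phi>))"
proof -
  define g where "g m r = prob {\<omega>\<in>space M. (\<Sum>j<Suc m. Z j \<omega>) = r}" for m r
  define b where "b m r = (1 - q) * q ^ m * g m r" for m r
  have b_nonneg: "0 \<le> b m r" for m r unfolding b_def g_def using q by simp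
  have u_pow: "\<bar>u ^ r\<bar> \<le> 1" for r using u by (simp add: power_abs power_le_one)
  have a_le: "norm (b m r * u ^ r) \<le> b m r" for m r
    using mult_left_mono[OF u_pow b_nonneg] by (simp add: abs_mult b_nonneg)
  have b_sums: "(\<lambda>r. b m r) sums ((1 - q) * q ^ m)" for m
    using sums_mult[OF sums_prob_nat[of "\<lambda>\<omega>. \<Sum>j<Suc m. Z j \<omega>"], of "(1 - q) * q ^ m"]
    unfolding b_def g_def by simp
  have q\<phi>: "\<bar>q * \<phi>\<bar> < 1"
    using q mult_left_le[OF abs_integral_power_Z_le[OF u] q(1)] unfolding \<phi>_def by (simp add: abs_mult)
  have "((\<lambda>r. compound_geom_law M Z (1 - q) r * u ^ r) has_sum ((1 - q) * \<phi> / (1 - q * \<phi>))) UNIV"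
  proof (rule has_sum_swap_dominated[where a = "\<lambda>m r. b m r * u ^ r"])
    show "((\<lambda>r. b m r) has_sum (1 - q) * q ^ m) UNIV" for m
      using b_sums b_nonneg by (rule sums_nonneg_imp_has_sum)
    show "(\<lambda>m. (1 - q) * q ^ m) summable_on UNIV"
      using q by (intro summable_nonneg_imp_summable_on summable_mult summable_geometric) auto
    show "norm (b m r * u ^ r) \<le> b m r" for m r by (rule a_le)
    show "((\<lambda>r. b m r * u ^ r) has_sum (1 - q) * q ^ m * \<phi> ^ Suc m) UNIV" for m
      using has_sum_cmult_right[OF has_sum_power_sum_Z[OF u, of "Suc m"], of "(1 - q) * q ^ m"]
      unfolding b_def g_def \<phi>_def by (simp add: ac_simps)
    show "((\<lambda>m. b m r * u ^ r) has_sum compound_geom_law M Z (1 - q) r * u ^ r) UNIV" for r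
    proof (rule has_sum_finite_neutralI[of "{..<r}"])
      show "b m r * u ^ r = 0" if "m \<in> UNIV - {..<r}" for m
        using that prob_sum_Z_less[of r "Suc m"] unfolding b_def g_def by simp
      show "compound_geom_law M Z (1 - q) r * u ^ r = (\<Sum>m<r. b m r * u ^ r)"
        unfolding compound_geom_law_eq_sum b_def g_def geom_law_def sum_distrib_right
        by (simp add: ac_simps)
    qed auto
    have "(\<lambda>m. (1 - q) * q ^ m * \<phi> ^ Suc m) = (\<lambda>m. (1 - q) * \<phi> * (q * \<phi>) ^ m)"
      by (simp add: power_mult_distrib ac_simps)
    then show "((\<lambda>m. (1 - q) * q ^ m * \<phi> ^ Suc m) has_sum (1 - q) * \<phi> / (1 - q * \<phi>)) UNIV"
      using has_sum_geometric_mult[OF q\<phi>] by simp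
  qed
  then show ?thesis by (rule has_sum_imp_sums)
qed

end

section \<open>The time-changed chain\<close>

locale time_changed_dtmc = iid_interarrivals M Z for M :: "'m measure" and Z +
  fixes X :: "nat \<Rightarrow> 'm \<Rightarrow> 'a::countable" and A :: "'a \<Rightarrow> 'a \<Rightarrow> real"
  assumes dtmc_X: "dtmc M X A" and A_less_1: "\<And>i. A i i < 1"
    and indep_X_Z: "indep_set (sigma_sets (space M) {X t -` {a} \<inter> space M | t a. True})
                              (sigma_sets (space M) {Z j -` {k} \<inter> space M | j k. True})"
begin

abbreviation Y :: "nat \<Rightarrow> 'm \<Rightarrow> 'a" where
  "Y t \<omega> \<equiv> X (renewal_count (\<lambda>n. \<Sum>j<n. Z j \<omega>) t) \<omega>"

lemma measurable_X: "X t \<in> measurable M (count_space UNIV)"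
  using dtmc_X unfolding dtmc_def by blast

text \<open>\<open>L\<^sub>d t\<close> only depends on the first \<open>t\<close> interarrival times, because they are all
  at least 1.\<close>
lemma measurable_Y: "Y t \<in> measurable M (count_space UNIV)"
proof (rule measurable_compose_countable[where f = "\<lambda>i \<omega>. X i \<omega>", OF measurable_X])
  have "{\<omega>\<in>space M. renewal_count (\<lambda>n. \<Sum>j<n. Z j \<omega>) t = v} \<in> sets M" for v
  proof (rule sets_finite_dependence[of "{..<t}" Z])
    fix \<omega> \<omega>' assume \<omega>: "\<omega> \<in> {\<omega>\<in>space M. renewal_count (\<lambda>n. \<Sum>j<n. Z j \<omega>) t = v}"
      and \<omega>': "\<omega>' \<in> space M" and Z: "\<And>j. j \<in> {..<t} \<Longrightarrow> Z j \<omega>' = Z j \<omega>"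
    interpret \<omega>: renewal_epochs "\<lambda>n. \<Sum>j<n. Z j \<omega>" using \<omega> by (simp add: renewal_epochs_partial_sums)
    interpret \<omega>': renewal_epochs "\<lambda>n. \<Sum>j<n. Z j \<omega>'" using \<omega>' by (rule renewal_epochs_partial_sums)
    have "(\<Sum>j<n. Z j \<omega>') = (\<Sum>j<n. Z j \<omega>)" if "n \<le> t" for n
      using Z that by (intro sum.cong) auto
    then have "{n. n \<le> t \<and> (\<Sum>j<n. Z j \<omega>') \<le> t} = {n. n \<le> t \<and> (\<Sum>j<n. Z j \<omega>) \<le> t}"
      by auto
    then show "\<omega>' \<in> {\<omega>\<in>space M. renewal_count (\<lambda>n. \<Sum>j<n. Z j \<omega>) t = v}"
      using \<omega> \<omega>' \<omega>.renewal_count_eq_Max[of t] \<omega>'.renewal_count_eq_Max[of t] by simp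
  qed auto
  then show "(\<lambda>\<omega>. renewal_count (\<lambda>n. \<Sum>j<n. Z j \<omega>) t) \<in> measurable M (count_space UNIV)"
    by (simp add: measurable_count_space_eq2_countable vimage_def Int_def conj_commute)
qed

lemma Y_0: "\<omega> \<in> space M \<Longrightarrow> Y 0 \<omega> = X 0 \<omega>"
  using renewal_epochs.renewal_count_0[OF renewal_epochs_partial_sums] by simp

lemma sojourn_event_sigma_X:
  "{\<omega>\<in>space M. sojourn_path (\<lambda>t. X t \<omega>) s m n} \<in> sigma_sets (space M) {X t -` {a} \<inter> space M | t a. True}"
proof (rule sigma_sets_finite_dependence[of "{..(\<Sum>i<Suc n. m i)}" X])
  fix \<omega> \<omega>' assume "\<omega> \<in> {\<omega>\<in>space M. sojourn_path (\<lambda>t. X t \<omega>) s m n}" "\<omega>' \<in> space M"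
    "\<And>t. t \<in> {..(\<Sum>i<Suc n. m i)} \<Longrightarrow> X t \<omega>' = X t \<omega>"
  then show "\<omega>' \<in> {\<omega>\<in>space M. sojourn_path (\<lambda>t. X t \<omega>) s m n}"
    using sojourn_path_cong[of m n "\<lambda>t. X t \<omega>'" "\<lambda>t. X t \<omega>" s] by simp
qed auto

lemma block_event_sigma_Z:
  "{\<omega>\<in>space M. \<forall>k\<le>n. (\<Sum>j\<in>{(\<Sum>i<k. m i)..<(\<Sum>i<Suc k. m i)}. Z j \<omega>) = r k}
    \<in> sigma_sets (space M) {Z j -` {k} \<inter> space M | j k. True}"
proof (rule sigma_sets_finite_dependence[of "{..<(\<Sum>i<Suc n. m i)}" Z])
  fix \<omega> \<omega>'
  assume \<omega>: "\<omega> \<in> {\<omega>\<in>space M. \<forall>k\<le>n. (\<Sum>j\<in>{(\<Sum>i<k. m i)..<(\<Sum>i<Suc k. m i)}. Z j \<omega>) = r k}"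
    and \<omega>': "\<omega>' \<in> space M" and Z: "\<And>j. j \<in> {..<(\<Sum>i<Suc n. m i)} \<Longrightarrow> Z j \<omega>' = Z j \<omega>"
  have "(\<Sum>j\<in>{(\<Sum>i<k. m i)..<(\<Sum>i<Suc k. m i)}. Z j \<omega>') = (\<Sum>j\<in>{(\<Sum>i<k. m i)..<(\<Sum>i<Suc k. m i)}. Z j \<omega>)"
    if "k \<le> n" for k
  proof (rule sum.cong[OF refl])
    fix j assume "j \<in> {(\<Sum>i<k. m i)..<(\<Sum>i<Suc k. m i)}"
    then show "Z j \<omega>' = Z j \<omega>"
      using Z partial_sum_mono[of "Suc k" "Suc n" m] that by (simp del: sum.lessThan_Suc)
  qed
  then show "\<omega>' \<in> {\<omega>\<in>space M. \<forall>k\<le>n. (\<Sum>j\<in>{(\<Sum>i<k. m i)..<(\<Sum>i<Suc k. m i)}. Z j \<omega>) = r k}"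
    using \<omega> \<omega>' by simp
qed auto

lemma time_changed_sojourn_event:
  assumes r: "\<forall>k\<le>n. 1 \<le> r k"
  shows "{\<omega>\<in>space M. sojourn_path (\<lambda>t. Y t \<omega>) s r n}
    = (\<Union>m\<in>Pi\<^sub>E {..n} (\<lambda>k. {1..r k}). {\<omega>\<in>space M. sojourn_path (\<lambda>t. X t \<omega>) s m n}
        \<inter> {\<omega>\<in>space M. \<forall>k\<le>n. (\<Sum>j\<in>{(\<Sum>i<k. m i)..<(\<Sum>i<Suc k. m i)}. Z j \<omega>) = r k})"
proof (intro set_eqI)
  fix \<omega>
  show "\<omega> \<in> {\<omega>\<in>space M. sojourn_path (\<lambda>t. Y t \<omega>) s r n} \<longleftrightarrow> \<omega> \<in> (\<Union>m\<in>Pi\<^sub>E {..n} (\<lambda>k. {1..r k}).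
      {\<omega>\<in>space M. sojourn_path (\<lambda>t. X t \<omega>) s m n}
        \<inter> {\<omega>\<in>space M. \<forall>k\<le>n. (\<Sum>j\<in>{(\<Sum>i<k. m i)..<(\<Sum>i<Suc k. m i)}. Z j \<omega>) = r k})"
  proof (cases "\<omega> \<in> space M")
    case True
    show ?thesis
      using renewal_epochs.sojourn_path_time_change_iff[OF renewal_epochs_partial_sums[OF True] r,
          of "\<lambda>t. X t \<omega>" s]
      unfolding sum_partial_sums_iff_blocks using True by blast
  qed auto
qed

lemma time_changed_sojourn_prob:
  assumes r: "\<forall>k\<le>n. 1 \<le> r k"
  shows "prob {\<omega>\<in>space M. sojourn_path (\<lambda>t. Y t \<omega>) s r n}
     = prob {\<omega>\<in>space M. X 0 \<omega> = s 0} * (\<Prod>k<n. jump_matrix A (s k) (s (Suc k)))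
       * (\<Prod>k\<le>n. compound_geom_law M Z (1 - A (s k) (s k)) (r k))"
proof -
  define I where "I = Pi\<^sub>E {..n} (\<lambda>k. {1..r k})"
  define X_event where "X_event m = {\<omega>\<in>space M. sojourn_path (\<lambda>t. X t \<omega>) s m n}" for m
  define Z_event where "Z_event m = {\<omega>\<in>space M. \<forall>k\<le>n. (\<Sum>j\<in>{(\<Sum>i<k. m i)..<(\<Sum>i<Suc k. m i)}. Z j \<omega>) = r k}"
    for m
  define c where "c = prob {\<omega>\<in>space M. X 0 \<omega> = s 0} * (\<Prod>k<n. jump_matrix A (s k) (s (Suc k)))"
  define g where "g k v = prob {\<omega>\<in>space M. (\<Sum>j<k. Z j \<omega>) = v}" for k v
  have X_event: "X_event m \<in> sigma_sets (space M) {X t -` {a} \<inter> space M | t a. True}" for m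
    unfolding X_event_def by (rule sojourn_event_sigma_X)
  have Z_event: "Z_event m \<in> sigma_sets (space M) {Z j -` {k} \<inter> space M | j k. True}" for m
    unfolding Z_event_def by (rule block_event_sigma_Z)
  have events: "X_event m \<inter> Z_event m \<in> events" for m
    using X_event Z_event indep_setD_ev1[OF indep_X_Z] indep_setD_ev2[OF indep_X_Z] by blast
  have "disjoint_family_on (\<lambda>m. X_event m \<inter> Z_event m) I"
    unfolding disjoint_family_on_def I_def X_event_def
    by (auto dest: sojourn_path_unique intro: PiE_ext)
  then have "prob {\<omega>\<in>space M. sojourn_path (\<lambda>t. Y t \<omega>) s r n} = (\<Sum>m\<in>I. prob (X_event m \<inter> Z_event m))"
    unfolding time_changed_sojourn_event[OF r] I_def[symmetric] X_event_def[symmetric] Z_event_def[symmetric]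
    using events by (intro finite_measure_finite_Union) (auto simp: I_def intro!: finite_PiE)
  also have "\<dots> = (\<Sum>m\<in>I. prob (X_event m) * prob (Z_event m))"
    using X_event Z_event by (intro sum.cong refl indep_setD[OF indep_X_Z])
  also have "\<dots> = (\<Sum>m\<in>I. c * (\<Prod>k\<le>n. geom_law (1 - A (s k) (s k)) (m k) * g (m k) (r k)))"
  proof (intro sum.cong refl)
    fix m assume "m \<in> I"
    then have m: "\<forall>k\<le>n. 1 \<le> m k" unfolding I_def by auto
    show "prob (X_event m) * prob (Z_event m) = c * (\<Prod>k\<le>n. geom_law (1 - A (s k) (s k)) (m k) * g (m k) (r k))"
      using A_less_1 unfolding X_event_def Z_event_def prob_sum_Z_blocks[OF m] c_def g_def
      by (simp add: dtmc_sojourn_prob[OF dtmc_X _ m] prod.distrib)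
  qed
  also have "\<dots> = c * (\<Prod>k\<le>n. \<Sum>v\<in>{1..r k}. geom_law (1 - A (s k) (s k)) v * g v (r k))"
    unfolding I_def by (simp add: sum_distrib_left prod_sum_PiE)
  also have "\<dots> = c * (\<Prod>k\<le>n. compound_geom_law M Z (1 - A (s k) (s k)) (r k))"
    unfolding compound_geom_law_eq_sum g_def geom_law_def
    by (simp add: sum.atLeast1_atMost_eq)
  finally show ?thesis unfolding c_def .
qed

lemma semi_markov_typeA_time_changed:
  "semi_markov_typeA M Y (jump_matrix A) (\<lambda>i. compound_geom_law M Z (1 - A i i))"
proof -
  have Y_0_event: "{\<omega>\<in>space M. Y 0 \<omega> = v} = {\<omega>\<in>space M. X 0 \<omega> = v}" for v
    using Y_0 by auto
  show ?thesis
    unfolding semi_markov_typeA_def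
    by (intro conjI allI impI measurable_Y) (unfold Y_0_event, rule time_changed_sojourn_prob)
qed

end

theorem mainTheorem3:
  fixes M :: "'m measure" and X :: "nat \<Rightarrow> 'm \<Rightarrow> 'a::countable"
    and A :: "'a \<Rightarrow> 'a \<Rightarrow> real" and Z :: "nat \<Rightarrow> 'm \<Rightarrow> nat"
  assumes "prob_space M"
    and "\<forall>i j. 0 \<le> A i j"
    and "\<forall>i. (A i has_sum 1) UNIV"
    and "\<forall>i. A i i < 1"
    and "dtmc M X A"
    and "\<forall>j. Z j \<in> measurable M (count_space UNIV)"
    and "prob_space.indep_vars M (\<lambda>_. count_space UNIV) Z UNIV"
    and "\<forall>j. distr M (count_space UNIV) (Z j) = distr M (count_space UNIV) (Z 0)"
    and "\<forall>j. \<forall>\<omega>\<in>space M. 1 \<le> Z j \<omega>"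
    and "prob_space.indep_set M
           (sigma_sets (space M) {X t -` {a} \<inter> space M | t a. True})
           (sigma_sets (space M) {Z j -` {k} \<inter> space M | j k. True})"
  shows "semi_markov_typeA M X (jump_matrix A) (\<lambda>i. geom_law (1 - A i i))
       \<and> semi_markov_typeA M
           (\<lambda>t \<omega>. X (renewal_count (\<lambda>n. \<Sum>j<n. Z j \<omega>) t) \<omega>)
           (jump_matrix A) (\<lambda>i. compound_geom_law M Z (1 - A i i))
       \<and> (\<forall>i (u::real). \<bar>u\<bar> \<le> 1 \<longrightarrow>
            (\<lambda>r. compound_geom_law M Z (1 - A i i) r * u ^ r) sums
            ((1 - A i i) * integral\<^sup>L M (\<lambda>\<omega>. u ^ Z 0 \<omega>)
               / (1 - A i i * integral\<^sup>L M (\<lambda>\<omega>. u ^ Z 0 \<omega>))))"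
proof -
  interpret time_changed_dtmc M Z X A
    using assms(1,4-10)
    by (intro time_changed_dtmc.intro iid_interarrivals.intro iid_interarrivals_axioms.intro
        time_changed_dtmc_axioms.intro) blast+
  have "(\<lambda>r. compound_geom_law M Z (1 - A i i) r * u ^ r) sums
      ((1 - A i i) * (\<integral>\<omega>. u ^ Z 0 \<omega> \<partial>M) / (1 - A i i * (\<integral>\<omega>. u ^ Z 0 \<omega> \<partial>M)))"
    if "\<bar>u\<bar> \<le> 1" for i and u :: real
    using sums_compound_geom_law[of "A i i" u] assms(2) A_less_1 that by simp
  moreover have "semi_markov_typeA M X (jump_matrix A) (\<lambda>i. geom_law (1 - A i i))"
    using A_less_1 by (intro semi_markov_typeA_dtmc[OF dtmc_X]) blast
  ultimately show ?thesis using semi_markov_typeA_time_changed by blast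
qed

end
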